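(* Let $(V,\mathcal H,\iota,W)$ be a generalized functional theory and let $\rho\in V^*$ be a pure-state $v$-representable density. If $\rho$ is a regular value of the smooth map $\iota^*|_{\mathcal P}:\mathcal P\to\mathrm{aff}(\iota^*(\mathcal P))$, then $\rho$ is uniquely $v$-representable.
   Context: A generalized functional theory is a tuple $(V,\mathcal H,\iota,W)$ with $V$ a finite-dimensional real vector space, $\mathcal H$ a finite-dimensional complex Hilbert space, $\iota:V\to i\mathfrak u(\mathcal H)$ a linear map into the Hermitian operators, and $W$ Hermitian. Density operators are regarded as elements of $(i\mathfrak u(\mathcal H))^*$ via the trace pairing; $\iota^*$ is the dual map. $\mathcal P$, the set of pure states (rank-one projectors), is a smooth manifold (identified with projective space). For $v\in V$, $\mathbf G_p(v)$ is the set of pure ground states of $\iota(v)+W$. A density $\rho$ is pure-state $v$-representable if $\rho\in\iota^*(\mathbf G_p(v))$ for some $v\in V$; it is uniquely $v$-representable if moreover every $v'\in V$ with $\rho\in\iota^*(\mathbf G_p(v'))$ satisfies $\iota(v')-\iota(v)\propto\mathbb 1$. A point $q$ is a regular value of a smooth map $f$ if the derivative of $f$ is surjective at every point of $f^{-1}(q)$ (vacuously so if $q\notin\mathrm{im} f$). *)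

theory Defs
  imports "HOL-Analysis.Analysis"
begin

text \<open>Operators on H = C^n are matrices of type complex^'n^'n.\<close>

definition adjoint_mat :: "complex^'n^'n \<Rightarrow> complex^'n^'n" where
  "adjoint_mat A = (\<chi> i j. cnj (A $ j $ i))"

definition hermitian :: "complex^'n^'n \<Rightarrow> bool" where
  "hermitian A \<longleftrightarrow> adjoint_mat A = A"

definition cinner :: "complex^'n \<Rightarrow> complex^'n \<Rightarrow> complex" where
  "cinner x y = (\<Sum>i\<in>UNIV. cnj (x $ i) * y $ i)"

definition proj :: "complex^'n \<Rightarrow> complex^'n^'n" where
  "proj psi = (\<chi> i j. psi $ i * cnj (psi $ j))"

definition pure_states :: "(complex^'n^'n) set" where
  "pure_states = {proj psi | psi. cinner psi psi = 1}"

definition is_ground_vector :: "complex^'n^'n \<Rightarrow> complex^'n \<Rightarrow> bool" where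
  "is_ground_vector H psi \<longleftrightarrow> psi \<noteq> 0 \<and>
     (\<exists>lam::real. H *v psi = complex_of_real lam *s psi \<and>
        (\<forall>mu phi. phi \<noteq> 0 \<and> H *v phi = mu *s phi \<longrightarrow> lam \<le> Re mu))"

definition pure_ground_states :: "complex^'n^'n \<Rightarrow> (complex^'n^'n) set" where
  "pure_ground_states H = {proj psi | psi. cinner psi psi = 1 \<and> is_ground_vector H psi}"

definition Gp :: "('v \<Rightarrow> complex^'n^'n) \<Rightarrow> complex^'n^'n \<Rightarrow> 'v \<Rightarrow> (complex^'n^'n) set" where
  "Gp iota W v = pure_ground_states (iota v + W)"

text \<open>Dual map iota^* : (i u(H))^* -> V^*, operators acting via the trace pairing.\<close>
definition dual_map :: "('v \<Rightarrow> complex^'n^'n) \<Rightarrow> complex^'n^'n \<Rightarrow> ('v \<Rightarrow> real)" where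
  "dual_map iota D = (\<lambda>v. Re (trace (D ** iota v)))"

definition gen_functional_theory :: "('v::euclidean_space \<Rightarrow> complex^'n^'n) \<Rightarrow> complex^'n^'n \<Rightarrow> bool" where
  "gen_functional_theory iota W \<longleftrightarrow> linear iota \<and> (\<forall>v. hermitian (iota v)) \<and> hermitian W"

definition pure_v_representable ::
  "('v \<Rightarrow> complex^'n^'n) \<Rightarrow> complex^'n^'n \<Rightarrow> ('v \<Rightarrow> real) \<Rightarrow> bool" where
  "pure_v_representable iota W rho \<longleftrightarrow> (\<exists>v. rho \<in> dual_map iota ` Gp iota W v)"

definition uniquely_v_representable ::
  "('v \<Rightarrow> complex^'n^'n) \<Rightarrow> complex^'n^'n \<Rightarrow> ('v \<Rightarrow> real) \<Rightarrow> bool" where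
  "uniquely_v_representable iota W rho \<longleftrightarrow>
     (\<exists>v. rho \<in> dual_map iota ` Gp iota W v \<and>
        (\<forall>v'. rho \<in> dual_map iota ` Gp iota W v' \<longrightarrow>
           (\<exists>c::real. iota v' - iota v = c *\<^sub>R mat 1)))"

text \<open>Tangent space of the embedded submanifold P of the Hermitian operators at p:
  velocities of curves in P through p.\<close>
definition tangent_space :: "(complex^'n^'n) set \<Rightarrow> complex^'n^'n \<Rightarrow> (complex^'n^'n) set" where
  "tangent_space S p = {X. \<exists>\<gamma>. (\<forall>t. \<gamma> t \<in> S) \<and> \<gamma> 0 = p \<and> (\<gamma> has_vector_derivative X) (at 0)}"

definition fspan :: "('v \<Rightarrow> real) set \<Rightarrow> ('v \<Rightarrow> real) set" where
  "fspan S = {f. \<exists>t c. finite t \<and> t \<subseteq> S \<and> f = (\<lambda>x. \<Sum>g\<in>t. c g * g x)}"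

text \<open>Tangent (direction) space of the affine hull aff(A) of a set A of functionals:
  the span of differences.\<close>
definition aff_direction :: "('v \<Rightarrow> real) set \<Rightarrow> ('v \<Rightarrow> real) set" where
  "aff_direction A = fspan {(\<lambda>x. f x - g x) | f g. f \<in> A \<and> g \<in> A}"

text \<open>Derivative of iota^*|_P at p (restriction of a linear map): X \<mapsto> iota^*(X) on T_p P.
  rho is a regular value iff this is surjective onto the tangent space of aff(iota^*(P))
  at every point of the fibre over rho.\<close>
definition regular_value ::
  "('v \<Rightarrow> complex^'n^'n) \<Rightarrow> ('v \<Rightarrow> real) \<Rightarrow> bool" where
  "regular_value iota rho \<longleftrightarrow>
     (\<forall>p\<in>pure_states. dual_map iota p = rho \<longrightarrow>
        dual_map iota ` tangent_space pure_states p = aff_direction (dual_map iota ` pure_states))"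

end

theory Submission
  imports Defs
begin

(* Hohenberg-Kohn argument: if P and P' are pure ground states for the potentials v and v' with
   the same density, comparing energies shows that P is also a ground state for v'.  The energies
   of both Hamiltonians are then stationary at P along the pure-state manifold, so the expectation
   of iota (v' - v) has zero derivative along every tangent vector at P.  Regularity of rho says
   that iota^* maps these tangent vectors onto all differences iota^* Q - iota^* P, so the
   expectation of iota (v' - v) is constant on pure states, which forces it to be a multiple of
   the identity. *)

lemma Re_cinner: "Re (cinner x y) = inner x y"
  by (simp add: cinner_def inner_vec_def Re_sum inner_complex_def)

lemma cinner_self_eq_1_iff: "cinner x x = 1 \<longleftrightarrow> norm x = 1"
proof -
  have "cinner x x = complex_of_real ((norm x)\<^sup>2)"
    using Re_cinner[of x x] by (simp add: complex_eq_iff power2_norm_eq_inner cinner_def Im_sum)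
  then show ?thesis
    using norm_ge_zero[of x] by (auto simp: complex_eq_iff power2_eq_1_iff simp del: norm_ge_zero)
qed

lemma complex_matrix_vector_mult_scaleR: "(A::complex^'n^'m) *v (c *\<^sub>R x) = c *\<^sub>R (A *v x)"
  by (rule linear_cmul[OF matrix_vector_mul_linear])

lemma complex_scaleR_matrix_vector_mult: "(c *\<^sub>R (A::complex^'n^'m)) *v x = c *\<^sub>R (A *v x)"
  by (simp add: vec_eq_iff matrix_vector_mult_def scaleR_sum_right)

lemma of_real_vector_mult: "complex_of_real c *s (x::complex^'n) = c *\<^sub>R x"
  by (simp add: vec_eq_iff of_real_def)

lemma quadratic_form_sgn:
  "inner x ((H::complex^'n^'n) *v x) = (norm x)\<^sup>2 * inner (sgn x) (H *v sgn x)"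
  by (cases "x = 0")
    (simp_all add: sgn_div_norm complex_matrix_vector_mult_scaleR power2_eq_square field_simps)

lemma hermitian_add: "hermitian A \<Longrightarrow> hermitian B \<Longrightarrow> hermitian (A + B)"
  by (simp add: hermitian_def adjoint_mat_def vec_eq_iff)

lemma hermitian_diff: "hermitian A \<Longrightarrow> hermitian B \<Longrightarrow> hermitian (A - B)"
  by (simp add: hermitian_def adjoint_mat_def vec_eq_iff)

lemma hermitian_scaleR_mat_1: "hermitian (c *\<^sub>R (mat 1 :: complex^'n^'n))"
  by (simp add: hermitian_def adjoint_mat_def vec_eq_iff mat_def)

lemma hermitian_cinner_commute:
  assumes "hermitian H"
  shows "cinner x (H *v y) = cinner (H *v x) y"
proof -
  have entry: "cnj (H $ j $ i) = H $ i $ j" for i j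
    using assms by (simp add: hermitian_def adjoint_mat_def vec_eq_iff)
  have "cinner (H *v x) y = (\<Sum>j\<in>UNIV. \<Sum>i\<in>UNIV. cnj (H $ j $ i) * cnj (x $ i) * y $ j)"
    unfolding cinner_def matrix_vector_mult_def by (simp add: sum_distrib_right)
  also have "\<dots> = cinner x (H *v y)"
    unfolding cinner_def matrix_vector_mult_def entry
    by (simp add: sum_distrib_left mult_ac) (rule sum.swap)
  finally show ?thesis by simp
qed

lemma hermitian_inner_commute: "hermitian H \<Longrightarrow> inner x (H *v y) = inner (H *v x) y"
  using hermitian_cinner_commute by (metis Re_cinner)

lemma hermitian_eq_0_if_quadratic_form_0:
  fixes B :: "complex^'n^'n"
  assumes "hermitian B" and "\<And>x. inner x (B *v x) = 0"
  shows "B = 0"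
proof -
  have "inner x (B *v y) = 0" for x y
  proof -
    have "inner (x + y) (B *v (x + y)) = inner x (B *v x) + inner y (B *v y) + 2 * inner x (B *v y)"
      using hermitian_inner_commute[OF assms(1), of y x]
      by (simp add: matrix_vector_right_distrib inner_add_left inner_add_right inner_commute)
    then show ?thesis using assms(2) by simp
  qed
  then have "B *v y = 0" for y
    using inner_eq_zero_iff[of "B *v y"] by blast
  then show ?thesis by (simp add: matrix_eq)
qed

lemma hermitian_min_quadratic_form_eigenvalue:
  fixes H :: "complex^'n^'n"
  assumes "hermitian H"
  obtains m phi0 where "phi0 \<noteq> 0" "H *v phi0 = complex_of_real m *s phi0"
    and "\<And>phi. norm phi = 1 \<Longrightarrow> m \<le> inner phi (H *v phi)"
proof -
  define f where "f x = inner x (H *v x)" for x :: "complex^'n"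
  have "continuous_on (sphere 0 1) f"
    unfolding f_def by (intro continuous_intros linear_continuous_on) simp
  moreover have "sphere (0::complex^'n) 1 \<noteq> {}"
    by simp
  ultimately obtain phi0 where phi0: "phi0 \<in> sphere 0 1"
    and min: "\<And>y. y \<in> sphere 0 1 \<Longrightarrow> f phi0 \<le> f y"
    using continuous_attains_inf[OF compact_sphere] by blast
  define m where "m = f phi0"
  have unit: "norm phi = 1 \<Longrightarrow> m \<le> f phi" for phi
    using min by (simp add: m_def)
  define g where "g x = f x - m * inner x x" for x
  have g_nonneg: "0 \<le> g x" for x
    using unit[of "sgn x"] quadratic_form_sgn[of x H]
    by (cases "x = 0") (simp_all add: g_def f_def norm_sgn dot_square_norm mult_left_mono)
  have g_phi0: "g phi0 = 0"
    using phi0 by (simp add: g_def m_def dot_square_norm)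
  define r where "r = H *v phi0 - m *\<^sub>R phi0"
  \<comment> \<open>perturbing the minimiser along the residual r shows that r vanishes\<close>
  have g_line: "g (phi0 + t *\<^sub>R r) = 2 * t * inner r r + t\<^sup>2 * g r" for t
    using hermitian_inner_commute[OF assms, of phi0 r] g_phi0
    by (simp add: g_def f_def r_def matrix_vector_right_distrib complex_matrix_vector_mult_scaleR
        inner_add_left inner_add_right inner_diff_left inner_diff_right power2_eq_square
        algebra_simps inner_commute)
  have line_nonneg: "0 \<le> 2 * t * inner r r + t\<^sup>2 * g r" for t
    using g_nonneg g_line by metis
  have "((\<lambda>t. 2 * t * inner r r + t\<^sup>2 * g r) has_real_derivative 2 * inner r r) (at 0)"
    by (auto intro!: derivative_eq_intros)
  then have "2 * inner r r = 0"
    by (rule DERIV_local_min[where d = 1]) (simp_all add: line_nonneg)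
  then have "H *v phi0 = complex_of_real m *s phi0"
    by (simp add: r_def of_real_vector_mult)
  moreover have "phi0 \<noteq> 0"
    using phi0 by auto
  ultimately show ?thesis
    using that unit by (simp add: f_def)
qed

definition trace_pairing :: "complex^'n^'n \<Rightarrow> complex^'n^'n \<Rightarrow> real" where
  "trace_pairing D H = Re (trace (D ** H))"

lemma dual_map_eq_trace_pairing: "dual_map iota D v = trace_pairing D (iota v)"
  by (simp add: dual_map_def trace_pairing_def)

lemma trace_pairing_sum: "trace_pairing D H = (\<Sum>i\<in>UNIV. \<Sum>k\<in>UNIV. Re (D $ i $ k * H $ k $ i))"
  by (simp add: trace_pairing_def trace_def matrix_matrix_mult_def Re_sum)

lemma trace_pairing_add_right: "trace_pairing D (A + B) = trace_pairing D A + trace_pairing D B"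
  by (simp add: trace_pairing_sum distrib_left sum.distrib)

lemma trace_pairing_diff_right: "trace_pairing D (A - B) = trace_pairing D A - trace_pairing D B"
  by (simp add: trace_pairing_sum right_diff_distrib sum_subtractf)

lemma linear_trace_pairing_left: "linear (\<lambda>D. trace_pairing D H)"
proof (rule linearI)
  show "trace_pairing (A + B) H = trace_pairing A H + trace_pairing B H" for A B
    by (simp add: trace_pairing_sum distrib_right sum.distrib)
  show "trace_pairing (c *\<^sub>R A) H = c *\<^sub>R trace_pairing A H" for c A
    by (simp add: trace_pairing_sum scaleR_sum_right sum_distrib_left algebra_simps)
qed

lemma trace_pairing_proj: "trace_pairing (proj psi) H = inner psi (H *v psi)"
proof -
  have "trace (proj psi ** H) = cinner psi (H *v psi)"
    unfolding trace_def proj_def matrix_matrix_mult_def matrix_vector_mult_def cinner_def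
    by (simp add: sum_distrib_left sum_distrib_right mult_ac) (rule sum.swap)
  then show ?thesis
    by (simp add: trace_pairing_def Re_cinner)
qed

lemma pure_ground_states_subset: "pure_ground_states H \<subseteq> pure_states"
  unfolding pure_ground_states_def pure_states_def by blast

lemma pure_ground_state_energy_le:
  assumes "hermitian H" and "P \<in> pure_ground_states H" and "Q \<in> pure_states"
  shows "trace_pairing P H \<le> trace_pairing Q H"
proof -
  obtain psi lam where P: "P = proj psi" "norm psi = 1" "psi \<noteq> 0"
    and ev: "H *v psi = complex_of_real lam *s psi"
    and lowest: "\<And>mu phi. phi \<noteq> 0 \<Longrightarrow> H *v phi = mu *s phi \<Longrightarrow> lam \<le> Re mu"
    using assms(2) unfolding pure_ground_states_def is_ground_vector_def cinner_self_eq_1_iff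
    by blast
  obtain phi where Q: "Q = proj phi" "norm phi = 1"
    using assms(3) unfolding pure_states_def cinner_self_eq_1_iff by blast
  obtain m phi0 where "phi0 \<noteq> 0" "H *v phi0 = complex_of_real m *s phi0"
    and m_le: "\<And>phi. norm phi = 1 \<Longrightarrow> m \<le> inner phi (H *v phi)"
    using hermitian_min_quadratic_form_eigenvalue[OF assms(1)] by blast
  then have "lam \<le> m"
    using lowest by fastforce
  have "trace_pairing P H = lam"
    using P ev by (simp add: trace_pairing_proj of_real_vector_mult dot_square_norm)
  also have "\<dots> \<le> trace_pairing Q H"
    using \<open>lam \<le> m\<close> m_le[OF Q(2)] by (simp add: Q trace_pairing_proj)
  finally show ?thesis .
qed

lemma trace_pairing_tangent_eq_0_at_min:
  assumes min: "\<And>Q. Q \<in> S \<Longrightarrow> trace_pairing P H \<le> trace_pairing Q H"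
    and "X \<in> tangent_space S P"
  shows "trace_pairing X H = 0"
proof -
  obtain \<gamma> where \<gamma>: "\<And>t. \<gamma> t \<in> S" "\<gamma> 0 = P" "(\<gamma> has_vector_derivative X) (at 0)"
    using assms(2) unfolding tangent_space_def by blast
  have "bounded_linear (\<lambda>D. trace_pairing D H)"
    by (rule linear_conv_bounded_linear[THEN iffD1, OF linear_trace_pairing_left])
  from bounded_linear.has_vector_derivative[OF this \<gamma>(3)]
  have "((\<lambda>t. trace_pairing (\<gamma> t) H) has_real_derivative trace_pairing X H) (at 0)"
    by (simp add: has_real_derivative_iff_has_vector_derivative)
  then show ?thesis
    by (rule DERIV_local_min[where d = 1]) (use \<gamma> min in auto)
qed

lemma hermitian_eq_scalar_if_pure_expectation_const:
  fixes A :: "complex^'n^'n"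
  assumes "hermitian A" and const: "\<And>Q. Q \<in> pure_states \<Longrightarrow> trace_pairing Q A = c"
  shows "A = c *\<^sub>R mat 1"
proof -
  define B where "B = A - c *\<^sub>R mat 1"
  have on_sphere: "inner y (B *v y) = 0" if "norm y = 1" for y
  proof -
    have "proj y \<in> pure_states"
      using that unfolding pure_states_def cinner_self_eq_1_iff by blast
    with const have "trace_pairing (proj y) A = c" .
    then show ?thesis
      using that
      by (simp add: B_def trace_pairing_proj matrix_vector_mult_diff_rdistrib
          complex_scaleR_matrix_vector_mult inner_diff_right dot_square_norm)
  qed
  have "inner x (B *v x) = 0" for x
    using on_sphere[of "sgn x"] quadratic_form_sgn[of x B] by (cases "x = 0") (simp_all add: norm_sgn)
  moreover have "hermitian B"
    unfolding B_def by (intro hermitian_diff assms(1) hermitian_scaleR_mat_1)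
  ultimately have "B = 0"
    using hermitian_eq_0_if_quadratic_form_0 by blast
  then show ?thesis
    by (simp add: B_def)
qed

lemma diff_mem_aff_direction:
  assumes "f \<in> A" and "g \<in> A"
  shows "(\<lambda>x. f x - g x) \<in> aff_direction A"
  unfolding aff_direction_def fspan_def
  by (rule CollectI, rule exI[of _ "{\<lambda>x. f x - g x}"], rule exI[of _ "\<lambda>_. 1"]) (use assms in auto)

lemma regular_value_tangent_preimage:
  assumes "regular_value iota (dual_map iota P)" and "P \<in> pure_states" and "Q \<in> pure_states"
  obtains X where "X \<in> tangent_space pure_states P"
    and "dual_map iota X = (\<lambda>u. dual_map iota Q u - dual_map iota P u)"
proof -
  have "(\<lambda>u. dual_map iota Q u - dual_map iota P u) \<in> aff_direction (dual_map iota ` pure_states)"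
    using assms(2,3) by (intro diff_mem_aff_direction imageI)
  also have "\<dots> = dual_map iota ` tangent_space pure_states P"
    using assms(1,2) unfolding regular_value_def by simp
  finally show ?thesis
    using that by auto
qed

lemma same_density_ground_state_minimizes:
  assumes "hermitian (iota v + W)" and "hermitian (iota v' + W)"
    and P: "P \<in> Gp iota W v" and P': "P' \<in> Gp iota W v'"
    and same_density: "dual_map iota P' = dual_map iota P"
    and Q: "Q \<in> pure_states"
  shows "trace_pairing P (iota v' + W) \<le> trace_pairing Q (iota v' + W)"
proof -
  have energy: "trace_pairing X (iota u + W) = dual_map iota X u + trace_pairing X W" for X u
    by (simp add: trace_pairing_add_right dual_map_eq_trace_pairing)
  have pure: "P \<in> pure_states" "P' \<in> pure_states"
    using P P' pure_ground_states_subset unfolding Gp_def by blast+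
  have "trace_pairing P (iota v + W) \<le> trace_pairing P' (iota v + W)"
    using pure_ground_state_energy_le assms(1) P pure(2) unfolding Gp_def by blast
  moreover have "trace_pairing P' (iota v' + W) \<le> trace_pairing P (iota v' + W)"
    using pure_ground_state_energy_le assms(2) P' pure(1) unfolding Gp_def by blast
  moreover have "trace_pairing P' (iota v' + W) \<le> trace_pairing Q (iota v' + W)"
    using pure_ground_state_energy_le assms(2) P' Q unfolding Gp_def by blast
  ultimately show ?thesis
    unfolding energy same_density by linarith
qed

lemma same_density_potentials_differ_by_constant:
  assumes functional_theory: "gen_functional_theory iota W"
    and regular: "regular_value iota (dual_map iota P)"
    and P: "P \<in> Gp iota W v" and P': "P' \<in> Gp iota W v'"
    and same_density: "dual_map iota P' = dual_map iota P"
  shows "\<exists>c. iota v' - iota v = c *\<^sub>R mat 1"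
proof -
  have "linear iota" and herm: "\<And>u. hermitian (iota u)" and "hermitian W"
    using functional_theory unfolding gen_functional_theory_def by auto
  then have herm_H: "hermitian (iota u + W)" for u
    by (simp add: hermitian_add)
  have pure: "P \<in> pure_states"
    using P pure_ground_states_subset unfolding Gp_def by blast
  define A where "A = iota v' - iota v"
  have dual_map_A: "dual_map iota X (v' - v) = trace_pairing X A" for X
    using \<open>linear iota\<close> by (simp add: A_def dual_map_eq_trace_pairing linear_diff)
  have tangent: "trace_pairing X A = 0" if "X \<in> tangent_space pure_states P" for X
  proof -
    have "trace_pairing X (iota v + W) = 0"
      using pure_ground_state_energy_le[OF herm_H] P that unfolding Gp_def
      by (blast intro: trace_pairing_tangent_eq_0_at_min)
    moreover have "trace_pairing X (iota v' + W) = 0"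
      using same_density_ground_state_minimizes[OF herm_H herm_H P P' same_density] that
      by (blast intro: trace_pairing_tangent_eq_0_at_min)
    ultimately show ?thesis
      by (simp add: A_def trace_pairing_add_right trace_pairing_diff_right)
  qed
  have "trace_pairing Q A = trace_pairing P A" if Q: "Q \<in> pure_states" for Q
  proof -
    obtain X where X: "X \<in> tangent_space pure_states P"
      and X_image: "dual_map iota X = (\<lambda>u. dual_map iota Q u - dual_map iota P u)"
      using regular_value_tangent_preimage[OF regular pure Q] .
    have "trace_pairing Q A - trace_pairing P A = dual_map iota X (v' - v)"
      unfolding dual_map_A[symmetric] X_image ..
    also have "\<dots> = 0"
      using tangent[OF X] by (simp add: dual_map_A)
    finally show ?thesis
      by simp
  qed
  then have "A = trace_pairing P A *\<^sub>R mat 1"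
    by (intro hermitian_eq_scalar_if_pure_expectation_const) (simp_all add: A_def hermitian_diff herm)
  then show ?thesis
    unfolding A_def by blast
qed

theorem proposition2p19:
  fixes iota :: "'v::euclidean_space \<Rightarrow> complex^'n^'n"
    and W :: "complex^'n^'n"
    and rho :: "'v \<Rightarrow> real"
  assumes "gen_functional_theory iota W"
    and "pure_v_representable iota W rho"
    and "regular_value iota rho"
  shows "uniquely_v_representable iota W rho"
proof -
  obtain v P where P: "P \<in> Gp iota W v" and rho: "rho = dual_map iota P"
    using assms(2) unfolding pure_v_representable_def by blast
  have "\<exists>c. iota v' - iota v = c *\<^sub>R mat 1" if rho_v': "rho \<in> dual_map iota ` Gp iota W v'" for v'
  proof -
    obtain P' where "P' \<in> Gp iota W v'" and "dual_map iota P' = dual_map iota P"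
      using rho_v' rho by blast
    then show ?thesis
      using same_density_potentials_differ_by_constant assms(1,3) P rho by blast
  qed
  then show ?thesis
    unfolding uniquely_v_representable_def using P rho by blast
qed

end
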